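(* Let $h,\Gamma,\rho_0$ be $C^2$ functions on the circle $\mathbb{T}^1$ with $h>0$, $\Gamma>0$ everywhere and $\rho_0 = c/h$ for a constant $c>0$. For $\epsilon>0$ let $r_\epsilon$ be a $C^2$ solution of $$\frac{\epsilon}{2}(\Gamma r_\epsilon)'' - (h r_\epsilon)' = -\frac{\epsilon}{2}(\Gamma\rho_0)'' \quad\text{on } \mathbb{T}^1,\qquad \int_{\mathbb{T}^1} r_\epsilon\,dx = 0.$$ Then there exist $\epsilon_0>0$ and a constant $C$ (depending only on $h,\Gamma,\rho_0$) such that $\|r_\epsilon'\|_{L^2(\mathbb{T}^1)}\le C\epsilon$ for all $0<\epsilon<\epsilon_0$. Explicitly, with $\alpha=\min h$ and, if $\Gamma$ is nonconstant, $\beta = \max\big(|h'| + \frac{\alpha}{3\max\Gamma'}|\Gamma''|\big)$ (and $\beta=\max|h'|$ if $\Gamma$ is constant), one has for $0<\epsilon<2\alpha/(3\max\Gamma')$ (all $\epsilon>0$ if $\Gamma$ is constant) $$\|r_\epsilon'\|_{L^2}\le \epsilon\Big(\frac{2\beta}{\alpha^2}\|(\Gamma\rho_0)'\|_{L^2} + \frac{1}{\alpha}\|(\Gamma\rho_0)''\|_{L^2}\Big).$$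
   Context: Here $r_\epsilon=\rho_\epsilon-\rho_0$, where $\rho_0=c/h$ is the invariant density of $\dot x=h(x)$ on the circle and $\rho_\epsilon$ the stationary density of $dx = h\,dt+\sqrt\epsilon\,\gamma(x)\circ dW$ with $\Gamma=\gamma^2$. Primes denote derivatives on $\mathbb{T}^1$. *)

theory Defs
  imports "HOL-Analysis.Analysis"
begin

text \<open>The circle T^1 is modelled as R/Z: functions on T^1 are 1-periodic functions
  real \<Rightarrow> real, and integrals over T^1 are integrals over [0,1].\<close>

definition periodic1 :: "(real \<Rightarrow> real) \<Rightarrow> bool" where
  "periodic1 f \<longleftrightarrow> (\<forall>x. f (x + 1) = f x)"

definition C2_circle :: "(real \<Rightarrow> real) \<Rightarrow> bool" where
  "C2_circle f \<longleftrightarrow> periodic1 f \<and> (\<forall>x. f differentiable (at x))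
     \<and> (\<forall>x. deriv f differentiable (at x)) \<and> continuous_on UNIV (deriv (deriv f))"

definition L2norm :: "(real \<Rightarrow> real) \<Rightarrow> real" where
  "L2norm f = sqrt (integral {0..1} (\<lambda>x. (f x)\<^sup>2))"

end

theory Submission
  imports Defs
begin

text \<open>
  Write f1 = (\<Gamma>\<rho>0)' and f2 = f1'.  The equation
  \<epsilon>/2 (\<Gamma>r)'' - (hr)' = -\<epsilon>/2 f2 is tested twice (energy method):

  (1) Integrated once it says that the flux \<epsilon>/2 (\<Gamma>r)' - hr + \<epsilon>/2 f1 is constant.  Testing
      against r (which has mean zero) and integrating \<Gamma> r r' by parts gives
      \<integral>(h - \<epsilon>\<Gamma>'/4) r^2 = \<epsilon>/2 \<integral>f1 r, hence |r| \<le> 3\<epsilon>|f1|/(5\<alpha>) when \<epsilon>\<Gamma>' \<le> 2\<alpha>/3.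
  (2) Testing the equation against r' gives \<integral>(h - 3\<epsilon>\<Gamma>'/4) r'^2 = \<integral>(\<epsilon>/2 \<Gamma>'' - h') r r' + \<epsilon>/2 \<integral>f2 r',
      hence |r'| \<le> (2\<beta>|r| + \<epsilon>|f2|)/\<alpha> when |\<epsilon>/2 \<Gamma>'' - h'| \<le> \<beta>.
\<close>

subsection \<open>The L^2 norm on [0,1]\<close>

text \<open>The L^2 norm is nonnegative (a non-integrable square has integral 0 by convention).\<close>
lemma L2norm_nonneg: "L2norm f \<ge> 0"
  unfolding L2norm_def
  by (cases "(\<lambda>x. (f x)\<^sup>2) integrable_on {0..1}")
     (auto intro!: integral_nonneg simp: not_integrable_integral)

lemma L2norm_square:
  assumes "continuous_on {0..1} f"
  shows "(L2norm f)\<^sup>2 = integral {0..1} (\<lambda>x. (f x)\<^sup>2)"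
proof -
  have "(\<lambda>x. (f x)\<^sup>2) integrable_on {0..1}"
    by (intro integrable_continuous_interval continuous_intros assms)
  then have "integral {0..1} (\<lambda>x. (f x)\<^sup>2) \<ge> 0" by (rule integral_nonneg) auto
  then show ?thesis unfolding L2norm_def by simp
qed

lemma quadratic_form_nonneg_discriminant:
  fixes A B C :: real
  assumes nonneg: "\<And>t. 0 \<le> A + 2 * t * B + t\<^sup>2 * C" and "C \<ge> 0"
  shows "B\<^sup>2 \<le> A * C"
proof (cases "C = 0")
  case True
  have "B = 0"
  proof (rule ccontr)
    assume "B \<noteq> 0"
    have "0 \<le> A + 2 * (- (A + 1) / (2 * B)) * B" using nonneg[of "- (A + 1) / (2 * B)"] True by simp
    also have "\<dots> = -1" using \<open>B \<noteq> 0\<close> by (simp add: field_simps)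
    finally show False by simp
  qed
  with True show ?thesis by simp
next
  case False
  with \<open>C \<ge> 0\<close> have "C > 0" by simp
  have "0 \<le> A + 2 * (- B / C) * B + (- B / C)\<^sup>2 * C" by (rule nonneg)
  also have "\<dots> = (A * C - B\<^sup>2) / C" using \<open>C > 0\<close> by (simp add: field_simps power2_eq_square)
  finally show ?thesis using \<open>C > 0\<close> by (simp add: divide_nonneg_pos zero_le_divide_iff)
qed

lemma L2_Cauchy_Schwarz:
  fixes f g :: "real \<Rightarrow> real"
  assumes f: "continuous_on {0..1} f" and g: "continuous_on {0..1} g"
  shows "integral {0..1} (\<lambda>x. f x * g x) \<le> L2norm f * L2norm g"
proof -
  define A where "A = integral {0..1} (\<lambda>x. (f x)\<^sup>2)"
  define B where "B = integral {0..1} (\<lambda>x. f x * g x)"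
  define C where "C = integral {0..1} (\<lambda>x. (g x)\<^sup>2)"
  have int: "((\<lambda>x. (f x)\<^sup>2) has_integral A) {0..1}" "((\<lambda>x. f x * g x) has_integral B) {0..1}"
      "((\<lambda>x. (g x)\<^sup>2) has_integral C) {0..1}"
    unfolding A_def B_def C_def
    by (intro integrable_integral integrable_continuous_interval continuous_intros f g)+
  have "0 \<le> A + 2 * t * B + t\<^sup>2 * C" for t
  proof -
    have "((\<lambda>x. (f x + t * g x)\<^sup>2) has_integral A + 2 * t * B + t\<^sup>2 * C) {0..1}"
    proof -
      have "((\<lambda>x. (f x)\<^sup>2 + 2 * t * (f x * g x) + t\<^sup>2 * (g x)\<^sup>2) has_integral A + 2 * t * B + t\<^sup>2 * C) {0..1}"
        by (intro has_integral_add has_integral_mult_right int)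
      then show ?thesis by (simp add: power2_eq_square algebra_simps)
    qed
    then show ?thesis by (rule has_integral_nonneg) simp
  qed
  moreover have "C \<ge> 0" by (rule has_integral_nonneg[OF int(3)]) simp
  ultimately have "B\<^sup>2 \<le> A * C" by (rule quadratic_form_nonneg_discriminant)
  then have "B \<le> sqrt (A * C)" by (simp add: real_le_rsqrt)
  then show ?thesis unfolding L2norm_def A_def B_def C_def by (simp add: real_sqrt_mult)
qed

lemma L2norm_mult_le:
  assumes w: "continuous_on {0..1} w" and r: "continuous_on {0..1} r"
    and bound: "\<And>x. x \<in> {0..1} \<Longrightarrow> \<bar>w x\<bar> \<le> \<beta>"
  shows "L2norm (\<lambda>x. w x * r x) \<le> \<beta> * L2norm r"
proof -
  have "\<beta> \<ge> 0" using bound[of 0] by simp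
  have "integral {0..1} (\<lambda>x. (w x * r x)\<^sup>2) \<le> integral {0..1} (\<lambda>x. \<beta>\<^sup>2 * (r x)\<^sup>2)"
  proof (rule integral_le)
    fix x :: real assume "x \<in> {0..1}"
    then have "(w x)\<^sup>2 \<le> \<beta>\<^sup>2" using power_mono[OF bound abs_ge_zero, of x 2] by simp
    then show "(w x * r x)\<^sup>2 \<le> \<beta>\<^sup>2 * (r x)\<^sup>2"
      by (simp add: power_mult_distrib mult_right_mono)
  qed (intro integrable_continuous_interval continuous_intros w r)+
  also have "\<dots> = \<beta>\<^sup>2 * (L2norm r)\<^sup>2"
    by (simp add: L2norm_square[OF r])
  finally have "sqrt (integral {0..1} (\<lambda>x. (w x * r x)\<^sup>2)) \<le> sqrt ((\<beta> * L2norm r)\<^sup>2)"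
    by (simp add: power_mult_distrib)
  then show ?thesis
    unfolding L2norm_def[of "\<lambda>x. w x * r x"] using \<open>\<beta> \<ge> 0\<close> L2norm_nonneg[of r] by simp
qed

lemma absorb_square:
  fixes X k b :: real
  assumes "0 \<le> X" "0 < k" "0 \<le> b" "k * X\<^sup>2 \<le> b * X"
  shows "X \<le> b / k"
proof (cases "X = 0")
  case False
  with assms have "k * X \<le> b" by (simp add: power2_eq_square mult_le_cancel_right)
  then show ?thesis using assms by (simp add: field_simps)
qed (use assms in simp)

lemma weighted_square_lower_bound:
  assumes q: "continuous_on {0..1} q" and u: "continuous_on {0..1} u"
    and bound: "\<And>x. x \<in> {0..1} \<Longrightarrow> k \<le> q x"
  shows "k * (L2norm u)\<^sup>2 \<le> integral {0..1} (\<lambda>x. q x * (u x)\<^sup>2)"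
  unfolding L2norm_square[OF u] integral_mult_right[symmetric]
  by (rule integral_le) (auto intro!: integrable_continuous_interval continuous_intros q u
      mult_right_mono bound)

lemma periodic_derivative_integral:
  fixes u u' :: "real \<Rightarrow> real"
  assumes "\<And>x. (u has_real_derivative u' x) (at x)" and "u 1 = u 0"
  shows "(u' has_integral 0) {0..1}"
proof -
  have "(u' has_integral (u 1 - u 0)) {0..1}"
    by (rule fundamental_theorem_of_calculus)
       (auto intro: has_field_derivative_at_within assms(1)
          simp: has_real_derivative_iff_has_vector_derivative[symmetric])
  then show ?thesis using assms(2) by simp
qed

lemma weighted_square_derivative_integral:
  fixes G G' u u' :: "real \<Rightarrow> real"
  assumes "\<And>x. (G has_real_derivative G' x) (at x)" "\<And>x. (u has_real_derivative u' x) (at x)"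
    and "G 1 = G 0" "u 1 = u 0"
  shows "((\<lambda>x. G' x * (u x)\<^sup>2 + 2 * G x * u x * u' x) has_integral 0) {0..1}"
proof (rule periodic_derivative_integral[where u = "\<lambda>x. G x * (u x)\<^sup>2"])
  show "((\<lambda>x. G x * (u x)\<^sup>2) has_real_derivative G' x * (u x)\<^sup>2 + 2 * G x * u x * u' x) (at x)" for x
    by (rule derivative_eq_intros assms refl | simp)+
qed (simp add: assms)

lemma DERIV_everywhere_imp_continuous_on:
  "(\<And>x. (f has_real_derivative f' x) (at x)) \<Longrightarrow> continuous_on S f"
  by (meson DERIV_isCont continuous_at_imp_continuous_on)

subsection \<open>The energy estimates for the stationary equation\<close>

text \<open>The equation \<epsilon>/2 (G r)'' - (h r)' = -\<epsilon>/2 f1' with the product rule expanded; G1, G2 etc.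
  stand for the derivatives of G, and G, r, r' are periodic.\<close>
locale stationary_equation =
  fixes G G1 G2 h h1 f1 f2 r r1 r2 :: "real \<Rightarrow> real" and \<epsilon> :: real
  assumes G_deriv: "\<And>x. (G has_real_derivative G1 x) (at x)"
    and G1_deriv: "\<And>x. (G1 has_real_derivative G2 x) (at x)"
    and G2_cont: "continuous_on UNIV G2"
    and h_deriv: "\<And>x. (h has_real_derivative h1 x) (at x)"
    and h1_cont: "continuous_on UNIV h1"
    and f1_deriv: "\<And>x. (f1 has_real_derivative f2 x) (at x)"
    and f2_cont: "continuous_on UNIV f2"
    and r_deriv: "\<And>x. (r has_real_derivative r1 x) (at x)"
    and r1_deriv: "\<And>x. (r1 has_real_derivative r2 x) (at x)"
    and G_periodic: "G 1 = G 0" and r_periodic: "r 1 = r 0" and r1_periodic: "r1 1 = r1 0"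
    and equation: "\<And>x. \<epsilon>/2 * (G2 x * r x + 2 * G1 x * r1 x + G x * r2 x) - (h1 x * r x + h x * r1 x)
                        = - \<epsilon>/2 * f2 x"
begin

lemma continuous_data:
  "continuous_on {0..1} G" "continuous_on {0..1} G1" "continuous_on {0..1} G2"
  "continuous_on {0..1} h" "continuous_on {0..1} h1" "continuous_on {0..1} f1"
  "continuous_on {0..1} f2" "continuous_on {0..1} r" "continuous_on {0..1} r1"
  by (rule DERIV_everywhere_imp_continuous_on G_deriv G1_deriv h_deriv f1_deriv r_deriv r1_deriv
      continuous_on_subset[OF G2_cont] continuous_on_subset[OF h1_cont]
      continuous_on_subset[OF f2_cont] subset_UNIV)+

text \<open>The equation is the derivative of the flux, which is therefore constant.\<close>
definition flux :: "real \<Rightarrow> real" where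
  "flux x = \<epsilon>/2 * (G1 x * r x + G x * r1 x) - h x * r x + \<epsilon>/2 * f1 x"

lemma flux_derivative_zero: "(flux has_real_derivative 0) (at x)"
proof -
  have "(flux has_real_derivative \<epsilon>/2 * ((G2 x * r x + G1 x * r1 x) + (G1 x * r1 x + G x * r2 x))
     - (h1 x * r x + h x * r1 x) + \<epsilon>/2 * f2 x) (at x)"
    unfolding flux_def[abs_def]
    by (intro DERIV_add DERIV_diff DERIV_cmult f1_deriv)
       (auto intro!: derivative_eq_intros G_deriv G1_deriv h_deriv r_deriv r1_deriv)
  then show ?thesis using equation[of x] by (simp add: algebra_simps)
qed

lemma flux_constant: "flux x = flux 0"
  using flux_derivative_zero by (blast intro: DERIV_isconst_all)

text \<open>First energy identity: the constant flux tested against the mean-zero function r.\<close>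
lemma first_energy_identity:
  assumes "integral {0..1} r = 0"
  shows "integral {0..1} (\<lambda>x. (h x - \<epsilon> * G1 x / 4) * (r x)\<^sup>2)
           = \<epsilon>/2 * integral {0..1} (\<lambda>x. f1 x * r x)"
proof -
  define Q where "Q = integral {0..1} (\<lambda>x. (h x - \<epsilon> * G1 x / 4) * (r x)\<^sup>2)"
  define B where "B = integral {0..1} (\<lambda>x. f1 x * r x)"
  have Q: "((\<lambda>x. (h x - \<epsilon> * G1 x / 4) * (r x)\<^sup>2) has_integral Q) {0..1}"
    unfolding Q_def
    by (intro integrable_integral integrable_continuous_interval continuous_intros continuous_data) auto
  have B: "((\<lambda>x. f1 x * r x) has_integral B) {0..1}"
    unfolding B_def
    by (intro integrable_integral integrable_continuous_interval continuous_intros continuous_data)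
  have r0: "(r has_integral 0) {0..1}"
    using assms integrable_integral[OF integrable_continuous_interval[OF continuous_data(8)]] by simp
  have "(\<lambda>x. flux x * r x) = (\<lambda>x. flux 0 * r x)"
    by (intro ext arg_cong2[where f = "(*)"] flux_constant refl)
  then have flux_integral: "((\<lambda>x. flux x * r x) has_integral 0) {0..1}"
    using has_integral_mult_right[OF r0, of "flux 0"] by simp
  have "(\<lambda>x. flux x * r x) = (\<lambda>x. \<epsilon>/4 * (G1 x * (r x)\<^sup>2 + 2 * G x * r x * r1 x)
      - (h x - \<epsilon> * G1 x / 4) * (r x)\<^sup>2 + \<epsilon>/2 * (f1 x * r x))"
    by (rule ext) (simp add: flux_def algebra_simps power2_eq_square)
  then have "((\<lambda>x. flux x * r x) has_integral \<epsilon>/4 * 0 - Q + \<epsilon>/2 * B) {0..1}"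
    by (simp only:) (intro has_integral_add has_integral_diff has_integral_mult_right Q B
        weighted_square_derivative_integral G_deriv r_deriv G_periodic r_periodic)
  from this flux_integral have "\<epsilon>/4 * 0 - Q + \<epsilon>/2 * B = 0" by (rule has_integral_unique)
  then show ?thesis unfolding Q_def B_def by simp
qed

text \<open>Second energy identity: the equation tested against r'.\<close>
lemma second_energy_identity:
  "integral {0..1} (\<lambda>x. (h x - 3 * \<epsilon> * G1 x / 4) * (r1 x)\<^sup>2)
     = integral {0..1} (\<lambda>x. ((\<epsilon>/2 * G2 x - h1 x) * r x) * r1 x)
       + \<epsilon>/2 * integral {0..1} (\<lambda>x. f2 x * r1 x)"
proof -
  define I where "I = integral {0..1} (\<lambda>x. ((\<epsilon>/2 * G2 x - h1 x) * r x) * r1 x)"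
  define B where "B = integral {0..1} (\<lambda>x. f2 x * r1 x)"
  have I: "((\<lambda>x. ((\<epsilon>/2 * G2 x - h1 x) * r x) * r1 x) has_integral I) {0..1}"
    unfolding I_def
    by (intro integrable_integral integrable_continuous_interval continuous_intros continuous_data)
  have B: "((\<lambda>x. f2 x * r1 x) has_integral B) {0..1}"
    unfolding B_def
    by (intro integrable_integral integrable_continuous_interval continuous_intros continuous_data)
  have "(\<lambda>x. (h x - 3 * \<epsilon> * G1 x / 4) * (r1 x)\<^sup>2) = (\<lambda>x. \<epsilon>/4 * (G1 x * (r1 x)\<^sup>2 + 2 * G x * r1 x * r2 x)
      + ((\<epsilon>/2 * G2 x - h1 x) * r x) * r1 x + \<epsilon>/2 * (f2 x * r1 x))"
  proof
    fix x
    have "\<epsilon>/4 * (G1 x * (r1 x)\<^sup>2 + 2 * G x * r1 x * r2 x)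
        + ((\<epsilon>/2 * G2 x - h1 x) * r x) * r1 x + \<epsilon>/2 * (f2 x * r1 x)
        - (h x - 3 * \<epsilon> * G1 x / 4) * (r1 x)\<^sup>2
      = (\<epsilon>/2 * (G2 x * r x + 2 * G1 x * r1 x + G x * r2 x) - (h1 x * r x + h x * r1 x)
          + \<epsilon>/2 * f2 x) * r1 x"
      by (simp add: algebra_simps power2_eq_square)
    then show "(h x - 3 * \<epsilon> * G1 x / 4) * (r1 x)\<^sup>2 = \<epsilon>/4 * (G1 x * (r1 x)\<^sup>2 + 2 * G x * r1 x * r2 x)
        + ((\<epsilon>/2 * G2 x - h1 x) * r x) * r1 x + \<epsilon>/2 * (f2 x * r1 x)"
      using equation[of x] by simp
  qed
  then have "((\<lambda>x. (h x - 3 * \<epsilon> * G1 x / 4) * (r1 x)\<^sup>2) has_integral \<epsilon>/4 * 0 + I + \<epsilon>/2 * B) {0..1}"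
    by (simp only:) (intro has_integral_add has_integral_mult_right I B
        weighted_square_derivative_integral G_deriv r1_deriv G_periodic r1_periodic)
  then show ?thesis unfolding I_def B_def by (simp add: integral_unique)
qed

lemma L2_bound_solution:
  assumes \<alpha>: "\<alpha> > 0" "\<And>x. x \<in> {0..1} \<Longrightarrow> \<alpha> \<le> h x"
    and small: "\<And>x. x \<in> {0..1} \<Longrightarrow> \<epsilon> * G1 x \<le> 2 * \<alpha> / 3"
    and eps: "\<epsilon> > 0" and mean_zero: "integral {0..1} r = 0"
  shows "L2norm r \<le> 3 * \<epsilon> * L2norm f1 / (5 * \<alpha>)"
proof -
  have "5 * \<alpha> / 6 * (L2norm r)\<^sup>2 \<le> integral {0..1} (\<lambda>x. (h x - \<epsilon> * G1 x / 4) * (r x)\<^sup>2)"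
    using \<alpha> small by (intro weighted_square_lower_bound continuous_intros continuous_data)
      (fastforce simp: field_simps)+
  also have "\<dots> = \<epsilon>/2 * integral {0..1} (\<lambda>x. f1 x * r x)"
    by (rule first_energy_identity[OF mean_zero])
  also have "\<dots> \<le> \<epsilon>/2 * L2norm f1 * L2norm r"
    using eps L2_Cauchy_Schwarz[OF continuous_data(6,8)] by simp
  finally have "L2norm r \<le> \<epsilon>/2 * L2norm f1 / (5 * \<alpha> / 6)"
    using \<alpha> eps L2norm_nonneg[of f1] by (intro absorb_square L2norm_nonneg) simp_all
  then show ?thesis using \<alpha> by (simp add: field_simps)
qed


lemma L2_bound_derivative:
  assumes \<alpha>: "\<alpha> > 0" "\<And>x. x \<in> {0..1} \<Longrightarrow> \<alpha> \<le> h x"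
    and small: "\<And>x. x \<in> {0..1} \<Longrightarrow> \<epsilon> * G1 x \<le> 2 * \<alpha> / 3"
    and \<beta>: "\<And>x. x \<in> {0..1} \<Longrightarrow> \<bar>\<epsilon>/2 * G2 x - h1 x\<bar> \<le> \<beta>"
    and eps: "\<epsilon> > 0"
  shows "L2norm r1 \<le> (2 * \<beta> * L2norm r + \<epsilon> * L2norm f2) / \<alpha>"
proof -
  have "\<beta> \<ge> 0" using \<beta>[of 0] by simp
  have "\<alpha> / 2 * (L2norm r1)\<^sup>2 \<le> integral {0..1} (\<lambda>x. (h x - 3 * \<epsilon> * G1 x / 4) * (r1 x)\<^sup>2)"
    using \<alpha> small by (intro weighted_square_lower_bound continuous_intros continuous_data)
      (fastforce simp: field_simps)+
  also have "\<dots> = integral {0..1} (\<lambda>x. ((\<epsilon>/2 * G2 x - h1 x) * r x) * r1 x)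
       + \<epsilon>/2 * integral {0..1} (\<lambda>x. f2 x * r1 x)"
    by (rule second_energy_identity)
  also have "\<dots> \<le> L2norm (\<lambda>x. (\<epsilon>/2 * G2 x - h1 x) * r x) * L2norm r1 + \<epsilon>/2 * (L2norm f2 * L2norm r1)"
    using eps by (intro add_mono mult_left_mono L2_Cauchy_Schwarz continuous_intros continuous_data)
      (simp_all add: L2norm_nonneg)
  also have "\<dots> \<le> (\<beta> * L2norm r) * L2norm r1 + \<epsilon>/2 * (L2norm f2 * L2norm r1)"
    using \<beta> by (intro add_mono mult_right_mono L2norm_mult_le L2norm_nonneg continuous_intros
        continuous_data) (simp_all add: L2norm_nonneg)
  also have "\<dots> = (\<beta> * L2norm r + \<epsilon>/2 * L2norm f2) * L2norm r1"
    by (simp add: algebra_simps)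
  finally have "L2norm r1 \<le> (\<beta> * L2norm r + \<epsilon>/2 * L2norm f2) / (\<alpha> / 2)"
    using \<alpha> eps \<open>\<beta> \<ge> 0\<close> L2norm_nonneg[of r] L2norm_nonneg[of f2]
    by (intro absorb_square L2norm_nonneg) simp_all
  then show ?thesis using \<alpha> by (simp add: field_simps)
qed

theorem energy_estimate:
  assumes \<alpha>: "\<alpha> > 0" "\<And>x. x \<in> {0..1} \<Longrightarrow> \<alpha> \<le> h x"
    and small: "\<And>x. x \<in> {0..1} \<Longrightarrow> \<epsilon> * G1 x \<le> 2 * \<alpha> / 3"
    and \<beta>: "\<And>x. x \<in> {0..1} \<Longrightarrow> \<bar>\<epsilon>/2 * G2 x - h1 x\<bar> \<le> \<beta>"
    and eps: "\<epsilon> > 0" and mean_zero: "integral {0..1} r = 0"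
  shows "L2norm r1 \<le> \<epsilon> * (2 * \<beta> / \<alpha>\<^sup>2 * L2norm f1 + 1 / \<alpha> * L2norm f2)"
proof -
  have "\<beta> \<ge> 0" using \<beta>[of 0] by simp
  have "0 \<le> \<epsilon> * L2norm f1 / \<alpha>" using \<alpha> eps L2norm_nonneg[of f1] by simp
  moreover have "3 * \<epsilon> * L2norm f1 / (5 * \<alpha>) = 3/5 * (\<epsilon> * L2norm f1 / \<alpha>)" by simp
  ultimately have "L2norm r \<le> \<epsilon> * L2norm f1 / \<alpha>"
    using L2_bound_solution[OF \<alpha> small eps mean_zero] by linarith
  then have "2 * \<beta> * L2norm r + \<epsilon> * L2norm f2 \<le> 2 * \<beta> * (\<epsilon> * L2norm f1 / \<alpha>) + \<epsilon> * L2norm f2"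
    using \<open>\<beta> \<ge> 0\<close> by (intro add_right_mono mult_left_mono) simp_all
  with L2_bound_derivative[OF \<alpha> small \<beta> eps] \<alpha>
  have "L2norm r1 \<le> (2 * \<beta> * (\<epsilon> * L2norm f1 / \<alpha>) + \<epsilon> * L2norm f2) / \<alpha>"
    by (meson divide_right_mono less_imp_le order_trans)
  also have "\<dots> = \<epsilon> * (2 * \<beta> / \<alpha>\<^sup>2 * L2norm f1 + 1 / \<alpha> * L2norm f2)"
    using \<alpha> by (simp add: field_simps power2_eq_square)
  finally show ?thesis .
qed

end

subsection \<open>Application to C^2 functions on the circle\<close>

lemma C2_circleD:
  assumes "C2_circle f"
  shows "\<And>x. (f has_real_derivative deriv f x) (at x)"
    and "\<And>x. (deriv f has_real_derivative deriv (deriv f) x) (at x)"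
    and "continuous_on UNIV (deriv (deriv f))"
    and "f 1 = f 0" and "deriv f 1 = deriv f 0"
proof -
  show d1: "(f has_real_derivative deriv f x) (at x)" for x
    using assms unfolding C2_circle_def by (simp add: DERIV_deriv_iff_real_differentiable)
  show "(deriv f has_real_derivative deriv (deriv f) x) (at x)" for x
    using assms unfolding C2_circle_def by (simp add: DERIV_deriv_iff_real_differentiable)
  show "continuous_on UNIV (deriv (deriv f))" using assms unfolding C2_circle_def by simp
  have shift: "f (x + 1) = f x" for x using assms unfolding C2_circle_def periodic1_def by simp
  then show "f 1 = f 0" using shift[of 0] by simp
  have "((\<lambda>x. f (x + 1)) has_real_derivative deriv f 1) (at 0)"
    using d1[of 1] DERIV_shift[of f "deriv f 1" 0 1] by simp
  then have "(f has_real_derivative deriv f 1) (at 0)" using shift by simp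
  then show "deriv f 1 = deriv f 0" using d1[of 0] DERIV_unique by blast
qed

lemma product_derivatives:
  assumes f: "\<And>x. (f has_real_derivative f1 x) (at x)" "\<And>x. (f1 has_real_derivative f2 x) (at x)"
    and g: "\<And>x. (g has_real_derivative g1 x) (at x)" "\<And>x. (g1 has_real_derivative g2 x) (at x)"
  shows "deriv (\<lambda>y. f y * g y) = (\<lambda>x. f1 x * g x + f x * g1 x)"
    and "(deriv (\<lambda>y. f y * g y) has_real_derivative f2 x * g x + 2 * f1 x * g1 x + f x * g2 x) (at x)"
proof -
  show first: "deriv (\<lambda>y. f y * g y) = (\<lambda>x. f1 x * g x + f x * g1 x)"
    by (rule ext, rule DERIV_imp_deriv) (rule derivative_eq_intros f g refl | simp)+
  show "(deriv (\<lambda>y. f y * g y) has_real_derivative f2 x * g x + 2 * f1 x * g1 x + f x * g2 x) (at x)"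
    unfolding first by (rule derivative_eq_intros f g refl | simp)+
qed

definition correction_solution ::
    "(real \<Rightarrow> real) \<Rightarrow> (real \<Rightarrow> real) \<Rightarrow> (real \<Rightarrow> real) \<Rightarrow> real \<Rightarrow> (real \<Rightarrow> real) \<Rightarrow> bool" where
  "correction_solution h \<Gamma> \<rho>0 \<epsilon> r \<longleftrightarrow> C2_circle r
     \<and> (\<forall>x. (\<epsilon>/2) * deriv (deriv (\<lambda>y. \<Gamma> y * r y)) x - deriv (\<lambda>y. h y * r y) x
            = - (\<epsilon>/2) * deriv (deriv (\<lambda>y. \<Gamma> y * \<rho>0 y)) x)
     \<and> integral {0..1} r = 0"

lemma circle_energy_estimate:
  assumes h: "C2_circle h" and \<Gamma>: "C2_circle \<Gamma>" and \<rho>0: "C2_circle \<rho>0"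
    and sol: "correction_solution h \<Gamma> \<rho>0 \<epsilon> r" and eps: "\<epsilon> > 0"
    and \<alpha>: "\<alpha> > 0" "\<And>x. x \<in> {0..1} \<Longrightarrow> \<alpha> \<le> h x"
    and small: "\<And>x. x \<in> {0..1} \<Longrightarrow> \<epsilon> * deriv \<Gamma> x \<le> 2 * \<alpha> / 3"
    and \<beta>: "\<And>x. x \<in> {0..1} \<Longrightarrow> \<bar>\<epsilon>/2 * deriv (deriv \<Gamma>) x - deriv h x\<bar> \<le> \<beta>"
  shows "L2norm (deriv r) \<le> \<epsilon> * (2 * \<beta> / \<alpha>\<^sup>2 * L2norm (deriv (\<lambda>y. \<Gamma> y * \<rho>0 y))
                 + 1 / \<alpha> * L2norm (deriv (deriv (\<lambda>y. \<Gamma> y * \<rho>0 y))))"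
proof -
  have r: "C2_circle r" using sol unfolding correction_solution_def by blast
  note hD = C2_circleD[OF h] and \<Gamma>D = C2_circleD[OF \<Gamma>] and \<rho>D = C2_circleD[OF \<rho>0]
    and rD = C2_circleD[OF r]
  note \<Gamma>\<rho> = product_derivatives[OF \<Gamma>D(1,2) \<rho>D(1,2)]
  note \<Gamma>r = product_derivatives[OF \<Gamma>D(1,2) rD(1,2)]
  note hr = product_derivatives[OF hD(1,2) rD(1,2)]
  define f1 where "f1 = deriv (\<lambda>y. \<Gamma> y * \<rho>0 y)"
  have f1_deriv_eq: "deriv f1 = (\<lambda>x. deriv (deriv \<Gamma>) x * \<rho>0 x + 2 * deriv \<Gamma> x * deriv \<rho>0 x
      + \<Gamma> x * deriv (deriv \<rho>0) x)"
    unfolding f1_def using \<Gamma>\<rho>(2) DERIV_imp_deriv by blast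
  interpret stationary_equation \<Gamma> "deriv \<Gamma>" "deriv (deriv \<Gamma>)" h "deriv h" f1 "deriv f1"
    r "deriv r" "deriv (deriv r)" \<epsilon>
  proof
    show "(f1 has_real_derivative deriv f1 x) (at x)" for x
      unfolding f1_deriv_eq unfolding f1_def by (rule \<Gamma>\<rho>(2))
    show "continuous_on UNIV (deriv f1)"
      unfolding f1_deriv_eq
      by (intro continuous_intros \<Gamma>D(3) \<rho>D(3) DERIV_everywhere_imp_continuous_on[OF \<Gamma>D(1)]
          DERIV_everywhere_imp_continuous_on[OF \<Gamma>D(2)] DERIV_everywhere_imp_continuous_on[OF \<rho>D(1)]
          DERIV_everywhere_imp_continuous_on[OF \<rho>D(2)])
    show "continuous_on UNIV (deriv h)" by (rule DERIV_everywhere_imp_continuous_on[OF hD(2)])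
    show "\<epsilon>/2 * (deriv (deriv \<Gamma>) x * r x + 2 * deriv \<Gamma> x * deriv r x + \<Gamma> x * deriv (deriv r) x)
        - (deriv h x * r x + h x * deriv r x) = - \<epsilon>/2 * deriv f1 x" for x
      using sol DERIV_imp_deriv[OF \<Gamma>r(2)] unfolding correction_solution_def f1_def hr(1) by auto
  qed (use \<Gamma>D rD hD in auto)
  show ?thesis
    using energy_estimate[OF \<alpha> small \<beta> eps] sol unfolding correction_solution_def f1_def by blast
qed

lemma le_SUP_interval:
  fixes f :: "real \<Rightarrow> real"
  assumes "continuous_on {0..1} f" and "x \<in> {0..1}"
  shows "f x \<le> (SUP y\<in>{0..1}. f y)"
  using assms
  by (intro cSUP_upper bounded_imp_bdd_above compact_imp_bounded compact_continuous_image) auto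

lemma INF_interval_positive:
  fixes f :: "real \<Rightarrow> real"
  assumes "continuous_on {0..1} f" and "\<And>x. f x > 0"
  shows "(INF y\<in>{0..1}. f y) > 0" and "\<And>x. x \<in> {0..1} \<Longrightarrow> (INF y\<in>{0..1}. f y) \<le> f x"
proof -
  obtain x0 where x0: "x0 \<in> {0..1}" "\<And>y. y \<in> {0..1} \<Longrightarrow> f x0 \<le> f y"
    using continuous_attains_inf[OF compact_Icc _ assms(1)] by auto
  have "(INF y\<in>{0..1}. f y) = f x0"
    using x0 by (intro antisym cINF_lower cINF_greatest bdd_belowI2[of _ "f x0"]) auto
  then show "(INF y\<in>{0..1}. f y) > 0" and "\<And>x. x \<in> {0..1} \<Longrightarrow> (INF y\<in>{0..1}. f y) \<le> f x"
    using x0 assms(2) by auto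
qed

lemma smallness_conditions:
  assumes h: "C2_circle h" and \<Gamma>: "C2_circle \<Gamma>"
    and M: "M > 0" "\<And>y. y \<in> {0..1} \<Longrightarrow> deriv \<Gamma> y \<le> M"
    and eps: "0 < \<epsilon>" "\<epsilon> < 2 * \<alpha> / (3 * M)" and x: "x \<in> {0..1}"
  shows "\<epsilon> * deriv \<Gamma> x \<le> 2 * \<alpha> / 3"
    and "\<bar>\<epsilon>/2 * deriv (deriv \<Gamma>) x - deriv h x\<bar>
           \<le> (SUP y\<in>{0..1}. \<bar>deriv h y\<bar> + \<alpha> / (3 * M) * \<bar>deriv (deriv \<Gamma>) y\<bar>)"
proof -
  have eps_M: "\<epsilon> * M < 2 * \<alpha> / 3" using eps M by (simp add: field_simps)
  have "\<epsilon> * deriv \<Gamma> x \<le> \<epsilon> * M" using M(2)[OF x] eps by simp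
  with eps_M show "\<epsilon> * deriv \<Gamma> x \<le> 2 * \<alpha> / 3" by linarith
  have "\<epsilon>/2 \<le> \<alpha> / (3 * M)" using eps_M M by (simp add: field_simps)
  then have "\<bar>\<epsilon>/2 * deriv (deriv \<Gamma>) x - deriv h x\<bar> \<le> \<bar>deriv h x\<bar> + \<alpha> / (3 * M) * \<bar>deriv (deriv \<Gamma>) x\<bar>"
    using eps mult_right_mono[of "\<epsilon>/2" "\<alpha> / (3 * M)" "\<bar>deriv (deriv \<Gamma>) x\<bar>"]
    by (simp add: abs_mult abs_triangle_ineq4 add.commute order_trans[OF abs_triangle_ineq4])
  also have "\<dots> \<le> (SUP y\<in>{0..1}. \<bar>deriv h y\<bar> + \<alpha> / (3 * M) * \<bar>deriv (deriv \<Gamma>) y\<bar>)"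
    using C2_circleD(3)[OF \<Gamma>] DERIV_everywhere_imp_continuous_on[OF C2_circleD(2)[OF h]] x
    by (intro le_SUP_interval continuous_intros) (auto elim: continuous_on_subset)
  finally show "\<bar>\<epsilon>/2 * deriv (deriv \<Gamma>) x - deriv h x\<bar>
      \<le> (SUP y\<in>{0..1}. \<bar>deriv h y\<bar> + \<alpha> / (3 * M) * \<bar>deriv (deriv \<Gamma>) y\<bar>)" .
qed

lemma constant_derivatives:
  assumes "\<And>x. \<Gamma> x = k"
  shows "deriv \<Gamma> x = 0" and "deriv (deriv \<Gamma>) x = 0"
proof -
  have "\<Gamma> = (\<lambda>_. k)" using assms by (rule ext)
  then show "deriv \<Gamma> x = 0" and "deriv (deriv \<Gamma>) x = 0" by simp_all
qed

text \<open>First assertion: |r'| = O(\<epsilon>), using the upper bound max M 1 > 0 for \<Gamma>'.\<close>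
lemma uniform_bound:
  assumes h: "C2_circle h" and \<Gamma>: "C2_circle \<Gamma>" and \<rho>0: "C2_circle \<rho>0" and h_pos: "\<And>x. h x > 0"
  shows "\<exists>\<epsilon>0 > 0. \<exists>C. \<forall>\<epsilon> r. 0 < \<epsilon> \<and> \<epsilon> < \<epsilon>0 \<and> correction_solution h \<Gamma> \<rho>0 \<epsilon> r
           \<longrightarrow> L2norm (deriv r) \<le> C * \<epsilon>"
proof -
  define \<alpha> where "\<alpha> = (INF x\<in>{0..1}. h x)"
  have \<alpha>: "\<alpha> > 0" "\<And>x. x \<in> {0..1} \<Longrightarrow> \<alpha> \<le> h x"
    using INF_interval_positive[OF DERIV_everywhere_imp_continuous_on[OF C2_circleD(1)[OF h]] h_pos]
    unfolding \<alpha>_def by auto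
  define M where "M = max (SUP x\<in>{0..1}. deriv \<Gamma> x) 1"
  have M: "M > 0" "\<And>x. x \<in> {0..1} \<Longrightarrow> deriv \<Gamma> x \<le> M"
    using le_SUP_interval[OF DERIV_everywhere_imp_continuous_on[OF C2_circleD(2)[OF \<Gamma>]]]
    unfolding M_def by (auto intro: max.coboundedI1)
  define \<beta> where "\<beta> = (SUP y\<in>{0..1}. \<bar>deriv h y\<bar> + \<alpha> / (3 * M) * \<bar>deriv (deriv \<Gamma>) y\<bar>)"
  define C where "C = 2 * \<beta> / \<alpha>\<^sup>2 * L2norm (deriv (\<lambda>y. \<Gamma> y * \<rho>0 y))
                 + 1 / \<alpha> * L2norm (deriv (deriv (\<lambda>y. \<Gamma> y * \<rho>0 y)))"
  have "L2norm (deriv r) \<le> C * \<epsilon>"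
    if eps: "0 < \<epsilon>" "\<epsilon> < 2 * \<alpha> / (3 * M)" and sol: "correction_solution h \<Gamma> \<rho>0 \<epsilon> r" for \<epsilon> r
    using circle_energy_estimate[OF h \<Gamma> \<rho>0 sol eps(1) \<alpha> smallness_conditions[OF h \<Gamma> M eps]]
    unfolding C_def \<beta>_def by (simp add: mult.commute)
  moreover have "2 * \<alpha> / (3 * M) > 0" using \<alpha> M by simp
  ultimately show ?thesis by blast
qed

lemma explicit_bound:
  assumes h: "C2_circle h" and \<Gamma>: "C2_circle \<Gamma>" and \<rho>0: "C2_circle \<rho>0" and h_pos: "\<And>x. h x > 0"
    and \<alpha>_def: "\<alpha> = (INF x\<in>{0..1}. h x)" and M_def: "M = (SUP x\<in>{0..1}. deriv \<Gamma> x)"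
    and \<Gamma>const_def: "\<Gamma>const = (\<exists>k. \<forall>x. \<Gamma> x = k)"
    and \<beta>_def: "\<beta> = (if \<Gamma>const then (SUP x\<in>{0..1}. \<bar>deriv h x\<bar>)
              else (SUP x\<in>{0..1}. \<bar>deriv h x\<bar> + \<alpha> / (3 * M) * \<bar>deriv (deriv \<Gamma>) x\<bar>))"
    and eps: "0 < \<epsilon>" "\<Gamma>const \<or> \<epsilon> < 2 * \<alpha> / (3 * M)"
    and sol: "correction_solution h \<Gamma> \<rho>0 \<epsilon> r"
  shows "L2norm (deriv r) \<le> \<epsilon> * (2 * \<beta> / \<alpha>\<^sup>2 * L2norm (deriv (\<lambda>y. \<Gamma> y * \<rho>0 y))
                 + 1 / \<alpha> * L2norm (deriv (deriv (\<lambda>y. \<Gamma> y * \<rho>0 y))))"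
proof -
  have \<alpha>: "\<alpha> > 0" "\<And>x. x \<in> {0..1} \<Longrightarrow> \<alpha> \<le> h x"
    using INF_interval_positive[OF DERIV_everywhere_imp_continuous_on[OF C2_circleD(1)[OF h]] h_pos]
    unfolding \<alpha>_def by auto
  have "\<epsilon> * deriv \<Gamma> x \<le> 2 * \<alpha> / 3 \<and> \<bar>\<epsilon>/2 * deriv (deriv \<Gamma>) x - deriv h x\<bar> \<le> \<beta>"
    if x: "x \<in> {0..1}" for x
  proof (cases \<Gamma>const)
    case True
    then obtain k where "\<And>x. \<Gamma> x = k" unfolding \<Gamma>const_def by blast
    moreover have "\<bar>deriv h x\<bar> \<le> (SUP y\<in>{0..1}. \<bar>deriv h y\<bar>)"
      using DERIV_everywhere_imp_continuous_on[OF C2_circleD(2)[OF h]] x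
      by (intro le_SUP_interval continuous_intros) auto
    ultimately show ?thesis using True \<alpha> unfolding \<beta>_def by (simp add: constant_derivatives)
  next
    case False
    with eps have eps_M: "\<epsilon> < 2 * \<alpha> / (3 * M)" by blast
    have "M > 0"
    proof (rule ccontr)
      assume "\<not> M > 0"
      then have "2 * \<alpha> / (3 * M) \<le> 0" using \<alpha> by (simp add: divide_nonneg_nonpos)
      with eps eps_M show False by linarith
    qed
    moreover have "\<And>y. y \<in> {0..1} \<Longrightarrow> deriv \<Gamma> y \<le> M"
      using le_SUP_interval[OF DERIV_everywhere_imp_continuous_on[OF C2_circleD(2)[OF \<Gamma>]]]
      unfolding M_def by blast
    ultimately show ?thesis
      using smallness_conditions[OF h \<Gamma> _ _ eps(1) eps_M x] False unfolding \<beta>_def by simp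
  qed
  then show ?thesis using circle_energy_estimate[OF h \<Gamma> \<rho>0 sol eps(1) \<alpha>] by blast
qed

theorem mainTheorem4:
  fixes h \<Gamma> \<rho>0 :: "real \<Rightarrow> real" and c :: real
  assumes "C2_circle h" and "C2_circle \<Gamma>" and "C2_circle \<rho>0"
    and "\<forall>x. h x > 0" and "\<forall>x. \<Gamma> x > 0"
    and "c > 0" and "\<forall>x. \<rho>0 x = c / h x"
  shows
   "(\<exists>\<epsilon>0 > 0. \<exists>C. \<forall>\<epsilon> r. 0 < \<epsilon> \<and> \<epsilon> < \<epsilon>0 \<and> C2_circle r
        \<and> (\<forall>x. (\<epsilon>/2) * deriv (deriv (\<lambda>y. \<Gamma> y * r y)) x - deriv (\<lambda>y. h y * r y) x
               = - (\<epsilon>/2) * deriv (deriv (\<lambda>y. \<Gamma> y * \<rho>0 y)) x)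
        \<and> integral {0..1} r = 0
        \<longrightarrow> L2norm (deriv r) \<le> C * \<epsilon>)
    \<and> (let \<alpha> = (INF x\<in>{0..1}. h x);
           M = (SUP x\<in>{0..1}. deriv \<Gamma> x);
           \<Gamma>const = (\<exists>k. \<forall>x. \<Gamma> x = k);
           \<beta> = (if \<Gamma>const then (SUP x\<in>{0..1}. \<bar>deriv h x\<bar>)
                else (SUP x\<in>{0..1}. \<bar>deriv h x\<bar> + \<alpha> / (3 * M) * \<bar>deriv (deriv \<Gamma>) x\<bar>))
       in \<forall>\<epsilon> r. 0 < \<epsilon> \<and> (\<Gamma>const \<or> \<epsilon> < 2 * \<alpha> / (3 * M)) \<and> C2_circle r
        \<and> (\<forall>x. (\<epsilon>/2) * deriv (deriv (\<lambda>y. \<Gamma> y * r y)) x - deriv (\<lambda>y. h y * r y) x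
               = - (\<epsilon>/2) * deriv (deriv (\<lambda>y. \<Gamma> y * \<rho>0 y)) x)
        \<and> integral {0..1} r = 0
        \<longrightarrow> L2norm (deriv r) \<le> \<epsilon> * (2 * \<beta> / \<alpha>\<^sup>2 * L2norm (deriv (\<lambda>y. \<Gamma> y * \<rho>0 y))
                 + 1 / \<alpha> * L2norm (deriv (deriv (\<lambda>y. \<Gamma> y * \<rho>0 y)))))"
proof -
  have h_pos: "\<And>x. h x > 0" using assms(4) by blast
  note uniform = uniform_bound[OF assms(1-3) h_pos]
  note explicit = explicit_bound[OF assms(1-3) h_pos refl refl refl refl]
  show ?thesis
    using uniform explicit unfolding correction_solution_def Let_def by blast
qed

end
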